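(* Let $\Sigma=[\sigma_{hk}]$ be a $p\times p$ Hermitian positive definite complex matrix and $\alpha=(n_1,m_1,\dots,n_p,m_p)\in\mathbb Z_{\ge0}^{2p}$ with supporting sets $N=\{h:n_h\neq0\}$, $M=\{k:m_k\neq0\}$. Then the moments of $\mathcal{CN}_p(\Sigma)$ satisfy the $\#N+\#M\le 2p$ relations $$\nu(\alpha)=\sum_{k\in M}m_k\,\sigma_{hk}\,\nu(\alpha^-_{hk})\quad\text{for each }h\in N,\qquad \nu(\alpha)=\sum_{h\in N}n_h\,\sigma_{hk}\,\nu(\alpha^-_{hk})\quad\text{for each }k\in M,$$ where $\alpha^-_{hk}=\alpha-e_{2h-1}-e_{2k}$.
   Context: $\mathcal{CN}_p(\Sigma)$ has density $\varphi(z;\Sigma)=\frac{1}{\pi^p\det\Sigma}\exp(-z^*\Sigma^{-1}z)$ on $\mathbb C^p\cong\mathbb R^{2p}$; $\nu(\alpha)=\int_{\mathbb C^p}\prod_{j=1}^p z_j^{n_j}\bar z_j^{m_j}\varphi(z;\Sigma)\,dz$; $(e_j)_{j=1}^{2p}$ is the canonical basis of $\mathbb R^{2p}$. *)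

theory Defs
  imports "HOL-Analysis.Analysis"
begin

text \<open>Complex p x p matrices are modelled as complex^'n^'n with p = CARD('n).
  C^p is complex^'n, a euclidean space of real dimension 2p, with Lebesgue measure lborel.\<close>

definition hermitian_mat :: "complex^'n^'n \<Rightarrow> bool" where
  "hermitian_mat S \<longleftrightarrow> (\<forall>h k. S$h$k = cnj (S$k$h))"

definition herm_form :: "complex^'n^'n \<Rightarrow> complex^'n \<Rightarrow> complex" where
  "herm_form S z = (\<Sum>h\<in>UNIV. \<Sum>k\<in>UNIV. cnj (z$h) * S$h$k * z$k)"

definition pos_def_mat :: "complex^'n^'n \<Rightarrow> bool" where
  "pos_def_mat S \<longleftrightarrow> (\<forall>z. z \<noteq> 0 \<longrightarrow> herm_form S z \<in> \<real> \<and> Re (herm_form S z) > 0)"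

definition cn_density :: "complex^'n^'n \<Rightarrow> complex^'n \<Rightarrow> complex" where
  "cn_density S z = exp (- herm_form (matrix_inv S) z) / (of_real pi ^ CARD('n) * det S)"

text \<open>Moment nu(alpha) with alpha = (n_1,m_1,...,n_p,m_p), given by the two maps n, m.\<close>
definition cn_moment :: "complex^'n^'n \<Rightarrow> ('n \<Rightarrow> nat) \<Rightarrow> ('n \<Rightarrow> nat) \<Rightarrow> complex" where
  "cn_moment S n m = (\<integral>z. (\<Prod>j\<in>UNIV. (z$j)^(n j) * (cnj (z$j))^(m j)) * cn_density S z \<partial>lborel)"

end

theory Submission
  imports Defs "HOL-Probability.Distributions"
begin

text \<open>Integrate by parts against the Gaussian weight exp (- z^* A z), A = S^-1: the derivative of a
  monomial in z and cnj z times the weight, along any direction, has integral zero since the weight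
  decays like a Gaussian. The Wirtinger derivative \<Sum>_j S_hj \<partial>/\<partial>(cnj z_j) lowers the conjugate
  exponents of a monomial and, as S A = 1, brings z_h down from the weight; applied to the monomial
  with n_h lowered by one, it yields the first relations. The derivative \<Sum>_h S_hk \<partial>/\<partial>z_h yields
  the second.\<close>

lemma integrable_exp_neg_sq:
  fixes c :: real assumes c: "c > 0"
  shows "integrable lborel (\<lambda>x::real. exp (- c * x\<^sup>2))"
proof -
  define \<sigma> where "\<sigma> = sqrt (1 / (2 * c))"
  have \<sigma>: "\<sigma> > 0" "2 * \<sigma>\<^sup>2 = 1 / c" using c by (simp_all add: \<sigma>_def)
  have eq: "exp (- c * x\<^sup>2) = sqrt (2 * pi * \<sigma>\<^sup>2) * normal_density 0 \<sigma> x" for x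
    using \<sigma> c by (simp add: normal_density_def field_simps)
  show ?thesis
    using \<sigma> by (subst eq) (intro integrable_mult_right integrable_normal_density)
qed

lemma integrable_exp_neg_norm_sq:
  fixes c :: real assumes c: "c > 0"
  shows "integrable lborel (\<lambda>z::'a::euclidean_space. exp (- c * (norm z)\<^sup>2))"
proof -
  have prod: "exp (- c * (norm z)\<^sup>2) = (\<Prod>b\<in>Basis. exp (- c * (z \<bullet> b)\<^sup>2))" for z :: 'a
    by (simp add: power2_norm_eq_inner euclidean_inner[of z z] power2_eq_square
        sum_distrib_left exp_sum[symmetric] sum_negf flip: power2_eq_square)
  have fin: "(\<integral>\<^sup>+x. ennreal (exp (- c * x\<^sup>2)) \<partial>lborel) < \<infinity>"
    using integrable_exp_neg_sq[OF c] unfolding integrable_iff_bounded by simp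
  have "(\<integral>\<^sup>+z. ennreal (norm (exp (- c * (norm (z::'a))\<^sup>2))) \<partial>lborel)
        = (\<integral>\<^sup>+z. (\<Prod>b\<in>Basis. ennreal (exp (- c * ((z::'a) \<bullet> b)\<^sup>2))) \<partial>lborel)"
    by (intro nn_integral_cong) (subst prod, simp add: prod_ennreal abs_prod)
  also have "\<dots> = (\<Prod>b\<in>(Basis::'a set). (\<integral>\<^sup>+x. ennreal (exp (- c * x\<^sup>2)) \<partial>lborel))"
    using nn_integral_lborel_prod[where f="\<lambda>b x. ennreal (exp (- c * x\<^sup>2))"] by simp
  also have "\<dots> < \<infinity>"
    using fin by (simp add: power_less_top_ennreal)
  finally show ?thesis
    unfolding integrable_iff_bounded by simp
qed

lemma integral_lborel_translate:
  fixes g :: "'a::euclidean_space \<Rightarrow> 'b::{banach, second_countable_topology}"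
  assumes "g \<in> borel_measurable borel"
  shows "integral\<^sup>L lborel (\<lambda>z. g (z + c)) = integral\<^sup>L lborel g"
proof -
  have "integral\<^sup>L lborel g = integral\<^sup>L (distr lborel borel ((+) c)) g"
    by (simp add: lborel_distr_plus)
  also have "\<dots> = integral\<^sup>L lborel (\<lambda>z. g (c + z))"
    using assms by (intro integral_distr) auto
  finally show ?thesis by (simp add: add.commute)
qed

lemma integrable_lborel_translate:
  fixes g :: "'a::euclidean_space \<Rightarrow> 'b::{banach, second_countable_topology}"
  assumes "integrable lborel g"
  shows "integrable lborel (\<lambda>z. g (z + c))"
proof -
  have "integrable (distr lborel borel ((+) c)) g"
    using assms by (simp add: lborel_distr_plus)
  then have "integrable lborel (\<lambda>z. g (c + z))"
    using assms by (subst (asm) integrable_distr_eq) auto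
  then show ?thesis by (simp add: add.commute)
qed

lemma has_vector_derivative_imp_tendsto_quotient:
  assumes "(f has_vector_derivative D) (at x)"
  shows "((\<lambda>y. (f y - f x) /\<^sub>R (y - x)) \<longlongrightarrow> D) (at x)"
proof -
  have "((\<lambda>y. ((f y - f x) - (y - x) *\<^sub>R D) /\<^sub>R norm (y - x)) \<longlongrightarrow> 0) (at x)"
    using assms unfolding has_vector_derivative_def has_derivative_at_within by simp
  then have "((\<lambda>y. norm (((f y - f x) - (y - x) *\<^sub>R D) /\<^sub>R norm (y - x))) \<longlongrightarrow> 0) (at x)"
    by (rule tendsto_norm_zero)
  moreover have "eventually (\<lambda>y. norm (((f y - f x) - (y - x) *\<^sub>R D) /\<^sub>R norm (y - x))
      = norm ((f y - f x) /\<^sub>R (y - x) - D)) (at x)"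
    unfolding eventually_at_filter
  proof (intro always_eventually allI impI)
    fix y assume "y \<noteq> x"
    have "(f y - f x) /\<^sub>R (y - x) - D = ((f y - f x) - (y - x) *\<^sub>R D) /\<^sub>R (y - x)"
      using \<open>y \<noteq> x\<close> by (simp add: scaleR_diff_right)
    then show "norm (((f y - f x) - (y - x) *\<^sub>R D) /\<^sub>R norm (y - x))
      = norm ((f y - f x) /\<^sub>R (y - x) - D)" by simp
  qed
  ultimately have "((\<lambda>y. norm ((f y - f x) /\<^sub>R (y - x) - D)) \<longlongrightarrow> 0) (at x)"
    by (rule Lim_transform_eventually)
  then show ?thesis
    by (simp add: tendsto_norm_zero_iff LIM_zero_iff)
qed

lemma half_norm_sq_le_norm_add_scaleR_sq:
  fixes z v :: "'a::real_normed_vector"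
  assumes "\<bar>s\<bar> \<le> 1"
  shows "(norm z)\<^sup>2 / 2 - (norm v)\<^sup>2 \<le> (norm (z + s *\<^sub>R v))\<^sup>2"
proof -
  have "norm z \<le> norm (z + s *\<^sub>R v) + norm (s *\<^sub>R v)"
    by (metis add_diff_cancel norm_triangle_ineq4)
  also have "norm (s *\<^sub>R v) \<le> norm v"
    using assms by (simp add: mult_left_le_one_le)
  finally have "(norm z)\<^sup>2 \<le> (norm (z + s *\<^sub>R v) + norm v)\<^sup>2"
    by (simp add: power_mono)
  also have "\<dots> \<le> 2 * (norm (z + s *\<^sub>R v))\<^sup>2 + 2 * (norm v)\<^sup>2"
    using sum_squares_bound[of "norm (z + s *\<^sub>R v)" "norm v"] by (simp add: power2_sum)
  finally show ?thesis by simp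
qed

text \<open>The difference quotients of g along v have vanishing integrals by translation invariance of
  Lebesgue measure, and converge to g' dominated by a Gaussian (mean value theorem).\<close>
lemma integral_directional_derivative_eq_0:
  fixes g g' :: "'a::euclidean_space \<Rightarrow> 'b::{real_inner, banach, second_countable_topology}"
  assumes g: "integrable lborel g"
    and g'_meas: "g' \<in> borel_measurable borel"
    and deriv: "\<And>w. ((\<lambda>t. g (w + t *\<^sub>R v)) has_vector_derivative g' w) (at 0)"
    and bound: "\<And>w. norm (g' w) \<le> C * exp (- \<mu> * (norm w)\<^sup>2)"
    and \<mu>: "\<mu> > 0"
  shows "integral\<^sup>L lborel g' = 0"
proof -
  have deriv_line: "((\<lambda>s. g (z + s *\<^sub>R v)) has_vector_derivative g' (z + t *\<^sub>R v)) (at t)" for z t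
  proof -
    have "((\<lambda>s. s - t) has_vector_derivative 1) (at t)"
      by (auto intro!: derivative_eq_intros simp: has_real_derivative_iff_has_vector_derivative[symmetric])
    from vector_diff_chain_at[OF this, of "\<lambda>s. g ((z + t *\<^sub>R v) + s *\<^sub>R v)"] deriv[of "z + t *\<^sub>R v"]
    show ?thesis by (simp add: o_def algebra_simps)
  qed
  have C: "C \<ge> 0"
    using order_trans[OF norm_ge_zero bound[of 0]] by (simp add: zero_le_mult_iff)
  define h where "h = (\<lambda>k::nat. inverse (real (Suc k)))"
  have h_pos: "0 < h k" and h_le: "h k \<le> 1" for k
    by (simp_all add: h_def inverse_le_1_iff)
  have h_lim: "filterlim h (at 0) sequentially"
    unfolding h_def
    by (intro filterlim_atI LIMSEQ_inverse_real_of_nat) simp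
  define q where "q = (\<lambda>k z. (g (z + h k *\<^sub>R v) - g z) /\<^sub>R h k)"
  define W where "W = (\<lambda>z::'a. C * exp (\<mu> * (norm v)\<^sup>2) * exp (- (\<mu>/2) * (norm z)\<^sup>2))"
  have "(\<lambda>k. q k z) \<longlonglongrightarrow> g' z" for z
  proof -
    have "((\<lambda>s. (g (z + s *\<^sub>R v) - g z) /\<^sub>R s) \<longlongrightarrow> g' z) (at 0)"
      using has_vector_derivative_imp_tendsto_quotient[OF deriv[of z]] by simp
    from filterlim_compose[OF this h_lim] show ?thesis by (simp add: q_def o_def)
  qed
  moreover have "norm (q k z) \<le> W z" for k z
  proof -
    have cont: "continuous_on {0..h k} (\<lambda>s. g (z + s *\<^sub>R v))"
      using deriv_line by (intro continuous_at_imp_continuous_on ballI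
          has_vector_derivative_continuous) blast
    obtain s where s: "s \<in> {0<..<h k}"
      and mvt: "norm (g (z + h k *\<^sub>R v) - g (z + 0 *\<^sub>R v)) \<le> norm ((h k - 0) *\<^sub>R g' (z + s *\<^sub>R v))"
      using mvt_general[OF h_pos cont, of "\<lambda>t d. d *\<^sub>R g' (z + t *\<^sub>R v)"] deriv_line
      unfolding has_vector_derivative_def by blast
    have "norm (q k z) \<le> norm (g' (z + s *\<^sub>R v))"
      using mvt h_pos[of k] by (simp add: q_def inverse_eq_divide pos_divide_le_eq mult.commute)
    also have "\<dots> \<le> C * exp (- \<mu> * (norm (z + s *\<^sub>R v))\<^sup>2)"
      by (rule bound)
    also have "\<dots> \<le> W z"
    proof -
      have "(norm z)\<^sup>2 / 2 - (norm v)\<^sup>2 \<le> (norm (z + s *\<^sub>R v))\<^sup>2"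
        using s h_le[of k] by (intro half_norm_sq_le_norm_add_scaleR_sq) auto
      then have "- \<mu> * (norm (z + s *\<^sub>R v))\<^sup>2 \<le> \<mu> * (norm v)\<^sup>2 + - (\<mu>/2) * (norm z)\<^sup>2"
        using mult_left_mono[OF _ less_imp_le[OF \<mu>]] by (fastforce simp: algebra_simps)
      then show ?thesis
        unfolding W_def using C by (simp add: mult.assoc mult_left_mono flip: exp_add)
    qed
    finally show ?thesis .
  qed
  moreover have "integrable lborel W"
    unfolding W_def using \<mu> by (intro integrable_mult_right integrable_exp_neg_norm_sq) auto
  moreover have "q k \<in> borel_measurable borel" for k
    unfolding q_def using g by measurable
  ultimately have "(\<lambda>k. integral\<^sup>L lborel (q k)) \<longlonglongrightarrow> integral\<^sup>L lborel g'"
    using g'_meas by (intro integral_dominated_convergence[where w=W]) auto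
  moreover have "integral\<^sup>L lborel (q k) = 0" for k
    using g integrable_lborel_translate[OF g] integral_lborel_translate[of g]
    by (simp add: q_def)
  ultimately show ?thesis
    by (simp add: LIMSEQ_const_iff)
qed

lemma herm_form_matrix_vector_mult: "herm_form S x = (\<Sum>h\<in>UNIV. cnj (x$h) * (S *v x)$h)"
  by (simp add: herm_form_def matrix_vector_mult_def sum_distrib_left mult.assoc)

lemma herm_form_scaleR: "herm_form S (r *\<^sub>R x) = of_real (r\<^sup>2) * herm_form S x"
proof -
  have "(r *\<^sub>R x)$h = of_real r * x$h" for h
    by (subst vector_scaleR_component) (rule scaleR_conv_of_real)
  then show ?thesis
    unfolding herm_form_def by (simp add: sum_distrib_left power2_eq_square algebra_simps)
qed

lemma herm_form_0 [simp]: "herm_form S 0 = 0"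
  by (simp add: herm_form_def)

lemma continuous_on_herm_form [continuous_intros]: "continuous_on X (herm_form S)"
  unfolding herm_form_def by (intro continuous_intros)

lemma pos_def_mat_lower_bound:
  fixes S :: "complex^'n^'n"
  assumes "pos_def_mat S"
  obtains l where "l > 0" "\<And>w. l * (norm w)\<^sup>2 \<le> Re (herm_form S w)"
proof -
  have "axis undefined 1 \<in> sphere (0::complex^'n) 1"
    by (simp add: norm_axis_1)
  then have ne: "sphere (0::complex^'n) 1 \<noteq> {}"
    by blast
  have "continuous_on (sphere 0 1) (\<lambda>w::complex^'n. Re (herm_form S w))"
    by (intro continuous_intros)
  then obtain u where u: "u \<in> sphere 0 1"
    and min: "\<And>w. w \<in> sphere 0 1 \<Longrightarrow> Re (herm_form S u) \<le> Re (herm_form S w)"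
    using continuous_attains_inf[OF compact_sphere ne] by blast
  have "u \<noteq> 0"
    using u by auto
  then have pos: "Re (herm_form S u) > 0"
    using assms unfolding pos_def_mat_def by blast
  have "Re (herm_form S u) * (norm w)\<^sup>2 \<le> Re (herm_form S w)" for w
  proof (cases "w = 0")
    case False
    define u' where "u' = inverse (norm w) *\<^sub>R w"
    have "u' \<in> sphere 0 1" and w: "w = norm w *\<^sub>R u'"
      using False by (simp_all add: u'_def)
    have "Re (herm_form S w) = (norm w)\<^sup>2 * Re (herm_form S u')"
      by (subst w) (simp add: herm_form_scaleR)
    also have "\<dots> \<ge> (norm w)\<^sup>2 * Re (herm_form S u)"
      using min[OF \<open>u' \<in> sphere 0 1\<close>] by (simp add: mult_left_mono)
    finally show ?thesis by (simp add: mult.commute)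
  qed simp
  with pos show ?thesis using that by blast
qed

lemma pos_def_mat_matrix_inv_mult:
  fixes S :: "complex^'n^'n"
  assumes "pos_def_mat S"
  shows "S ** matrix_inv S = mat 1" and "matrix_inv S ** S = mat 1"
proof -
  have "x = 0" if "S *v x = 0" for x
  proof -
    have "herm_form S x = 0"
      using that by (simp add: herm_form_matrix_vector_mult)
    then show ?thesis
      using assms unfolding pos_def_mat_def by (metis less_irrefl zero_complex.sel(1))
  qed
  then have "invertible S"
    using matrix_left_invertible_ker invertible_left_inverse by blast
  then have "S ** matrix_inv S = mat 1 \<and> matrix_inv S ** S = mat 1"
    unfolding invertible_def matrix_inv_def by (rule someI_ex)
  then show "S ** matrix_inv S = mat 1" and "matrix_inv S ** S = mat 1"
    by auto
qed

lemma herm_form_right_inverse: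
  fixes S A :: "complex^'n^'n"
  assumes "S ** A = mat 1"
  shows "herm_form A z = cnj (herm_form S (A *v z))"
proof -
  have "S *v (A *v z) = z"
    using assms by (simp add: matrix_vector_mul_assoc)
  then have "cnj (herm_form S (A *v z)) = (\<Sum>h\<in>UNIV. \<Sum>k\<in>UNIV. A$h$k * z$k * cnj (z$h))"
    by (simp add: herm_form_matrix_vector_mult matrix_vector_mult_def sum_distrib_right)
  also have "\<dots> = herm_form A z"
    unfolding herm_form_def by (intro sum.cong refl) (simp add: ac_simps)
  finally show ?thesis by simp
qed

lemma pos_def_mat_matrix_inv:
  fixes S :: "complex^'n^'n"
  assumes "pos_def_mat S"
  shows "pos_def_mat (matrix_inv S)"
  unfolding pos_def_mat_def
proof (intro allI impI)
  fix z :: "complex^'n" assume "z \<noteq> 0"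
  have "S *v (matrix_inv S *v z) = z"
    using pos_def_mat_matrix_inv_mult(1)[OF assms] by (simp add: matrix_vector_mul_assoc)
  with \<open>z \<noteq> 0\<close> have "matrix_inv S *v z \<noteq> 0"
    by auto
  then show "herm_form (matrix_inv S) z \<in> \<real> \<and> Re (herm_form (matrix_inv S) z) > 0"
    using assms unfolding herm_form_right_inverse[OF pos_def_mat_matrix_inv_mult(1)[OF assms]]
      pos_def_mat_def by (auto simp: Reals_cnj_iff)
qed

definition poly_growth :: "('a::real_normed_vector \<Rightarrow> complex) \<Rightarrow> bool" where
  "poly_growth F \<longleftrightarrow> (\<exists>C N. C \<ge> 0 \<and> (\<forall>z. norm (F z) \<le> C * (1 + norm z) ^ N))"

lemma poly_growth_const [simp]: "poly_growth (\<lambda>z. c)"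
  unfolding poly_growth_def by (intro exI[of _ "norm c"] exI[of _ 0]) simp

lemma poly_growth_nth: "poly_growth (\<lambda>z::complex^'n. z$j)"
  unfolding poly_growth_def
  by (intro exI[of _ 1] exI[of _ 1]) (auto intro: order_trans[OF Finite_Cartesian_Product.norm_nth_le])

lemma poly_growth_cnj: "poly_growth F \<Longrightarrow> poly_growth (\<lambda>z. cnj (F z))"
  unfolding poly_growth_def by simp

lemma poly_growth_uminus: "poly_growth F \<Longrightarrow> poly_growth (\<lambda>z. - F z)"
  unfolding poly_growth_def by simp

lemma poly_growth_add:
  assumes "poly_growth F" "poly_growth G"
  shows "poly_growth (\<lambda>z. F z + G z)"
proof -
  obtain C1 N1 where C1: "C1 \<ge> 0" "\<And>z. norm (F z) \<le> C1 * (1 + norm z) ^ N1"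
    using assms(1) unfolding poly_growth_def by blast
  obtain C2 N2 where C2: "C2 \<ge> 0" "\<And>z. norm (G z) \<le> C2 * (1 + norm z) ^ N2"
    using assms(2) unfolding poly_growth_def by blast
  have "norm (F z + G z) \<le> (C1 + C2) * (1 + norm z) ^ (N1 + N2)" for z
  proof -
    have "norm (F z + G z) \<le> C1 * (1 + norm z) ^ N1 + C2 * (1 + norm z) ^ N2"
      using norm_triangle_ineq[of "F z" "G z"] C1(2)[of z] C2(2)[of z] by linarith
    also have "\<dots> \<le> C1 * (1 + norm z) ^ (N1 + N2) + C2 * (1 + norm z) ^ (N1 + N2)"
      using C1(1) C2(1) by (intro add_mono mult_left_mono power_increasing) auto
    finally show ?thesis
      by (simp add: algebra_simps)
  qed
  then show ?thesis
    unfolding poly_growth_def using C1(1) C2(1) by (intro exI[of _ "C1 + C2"] exI[of _ "N1 + N2"]) auto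
qed

lemma poly_growth_mult:
  assumes "poly_growth F" "poly_growth G"
  shows "poly_growth (\<lambda>z. F z * G z)"
proof -
  obtain C1 N1 where C1: "C1 \<ge> 0" "\<And>z. norm (F z) \<le> C1 * (1 + norm z) ^ N1"
    using assms(1) unfolding poly_growth_def by blast
  obtain C2 N2 where C2: "C2 \<ge> 0" "\<And>z. norm (G z) \<le> C2 * (1 + norm z) ^ N2"
    using assms(2) unfolding poly_growth_def by blast
  have "norm (F z * G z) \<le> (C1 * (1 + norm z) ^ N1) * (C2 * (1 + norm z) ^ N2)" for z
    unfolding norm_mult using C1 C2 by (intro mult_mono) auto
  then show ?thesis
    unfolding poly_growth_def using C1(1) C2(1)
    by (intro exI[of _ "C1 * C2"] exI[of _ "N1 + N2"]) (simp add: algebra_simps power_add)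
qed

lemma poly_growth_diff: "poly_growth F \<Longrightarrow> poly_growth G \<Longrightarrow> poly_growth (\<lambda>z. F z - G z)"
  using poly_growth_add[of F "\<lambda>z. - G z"] poly_growth_uminus[of G] by simp

lemma poly_growth_sum:
  "finite A \<Longrightarrow> (\<And>i. i \<in> A \<Longrightarrow> poly_growth (F i)) \<Longrightarrow> poly_growth (\<lambda>z. \<Sum>i\<in>A. F i z)"
  by (induction A rule: finite_induct) (auto intro: poly_growth_add)

lemma poly_growth_prod:
  "finite A \<Longrightarrow> (\<And>i. i \<in> A \<Longrightarrow> poly_growth (F i)) \<Longrightarrow> poly_growth (\<lambda>z. \<Prod>i\<in>A. F i z)"
  by (induction A rule: finite_induct) (auto intro: poly_growth_mult)

lemma poly_growth_power: "poly_growth F \<Longrightarrow> poly_growth (\<lambda>z. F z ^ k)"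
  by (induction k) (auto intro: poly_growth_mult)

text \<open>Half of the Gaussian decay absorbs the polynomial: 1 + r \<le> B exp (a r^2) with N a \<le> l/2.\<close>
lemma one_plus_power_mult_exp_neg_sq_le:
  fixes l :: real assumes l: "l > 0"
  obtains K where "\<And>r. r \<ge> 0 \<Longrightarrow> (1 + r) ^ N * exp (- l * r\<^sup>2) \<le> K * exp (- (l/2) * r\<^sup>2)"
proof -
  define a where "a = l / (2 * (real N + 1))"
  have a: "a > 0" "real N * a \<le> l / 2"
    using l by (simp_all add: a_def field_simps)
  define B where "B = 2 + 1 / a"
  have B: "B \<ge> 0"
    using a by (simp add: B_def)
  have "(1 + r) ^ N * exp (- l * r\<^sup>2) \<le> B ^ N * exp (- (l/2) * r\<^sup>2)" if r: "r \<ge> 0" for r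
  proof -
    have "0 \<le> (r - 1/2)\<^sup>2"
      by simp
    then have "1 + r \<le> 2 + r\<^sup>2"
      by (simp add: power2_eq_square algebra_simps)
    also have "\<dots> \<le> B * (1 + a * r\<^sup>2)"
      using a r by (simp add: B_def algebra_simps)
    also have "\<dots> \<le> B * exp (a * r\<^sup>2)"
      using B by (intro mult_left_mono) (auto simp: add.commute exp_ge_add_one_self)
    finally have "(1 + r) ^ N \<le> (B * exp (a * r\<^sup>2)) ^ N"
      using r by (intro power_mono) auto
    also have "\<dots> = B ^ N * exp (real N * a * r\<^sup>2)"
      by (simp add: power_mult_distrib exp_of_nat_mult[symmetric] mult.assoc)
    finally have "(1 + r) ^ N * exp (- l * r\<^sup>2) \<le> B ^ N * exp (real N * a * r\<^sup>2 - l * r\<^sup>2)"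
      by (simp add: mult_right_mono exp_diff exp_minus field_simps)
    also have "\<dots> \<le> B ^ N * exp (- (l/2) * r\<^sup>2)"
      using mult_right_mono[OF a(2), of "r\<^sup>2"] B by (intro mult_left_mono) auto
    finally show ?thesis .
  qed
  then show ?thesis
    using that by blast
qed

lemma poly_growth_mult_exp_bound:
  fixes F Q :: "'a::real_normed_vector \<Rightarrow> complex"
  assumes "poly_growth F" and l: "l > 0" and Q: "\<And>z. l * (norm z)\<^sup>2 \<le> Re (Q z)"
  obtains K where "\<And>z. norm (F z * exp (- Q z)) \<le> K * exp (- (l/2) * (norm z)\<^sup>2)"
proof -
  obtain C N where C: "C \<ge> 0" "\<And>z. norm (F z) \<le> C * (1 + norm z) ^ N"
    using assms(1) unfolding poly_growth_def by blast
  obtain K where K: "\<And>r. r \<ge> 0 \<Longrightarrow> (1 + r) ^ N * exp (- l * r\<^sup>2) \<le> K * exp (- (l/2) * r\<^sup>2)"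
    using one_plus_power_mult_exp_neg_sq_le[OF l] by blast
  have "norm (F z * exp (- Q z)) \<le> (C * K) * exp (- (l/2) * (norm z)\<^sup>2)" for z
  proof -
    have "norm (F z * exp (- Q z)) = norm (F z) * exp (- Re (Q z))"
      by (simp add: norm_mult)
    also have "\<dots> \<le> C * ((1 + norm z) ^ N * exp (- l * (norm z)\<^sup>2))"
      using C Q[of z] by (simp only: mult.assoc[symmetric]) (intro mult_mono, auto)
    also have "\<dots> \<le> C * (K * exp (- (l/2) * (norm z)\<^sup>2))"
      using C K[of "norm z"] by (intro mult_left_mono) auto
    finally show ?thesis by simp
  qed
  then show ?thesis
    using that by blast
qed

lemma integrable_poly_growth_mult_exp:
  fixes F Q :: "'a::euclidean_space \<Rightarrow> complex"
  assumes "poly_growth F" and l: "l > 0" and Q: "\<And>z. l * (norm z)\<^sup>2 \<le> Re (Q z)"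
    and "continuous_on UNIV F" "continuous_on UNIV Q"
  shows "integrable lborel (\<lambda>z. F z * exp (- Q z))"
proof -
  obtain K where K: "\<And>z. norm (F z * exp (- Q z)) \<le> K * exp (- (l/2) * (norm z)\<^sup>2)"
    using poly_growth_mult_exp_bound[OF assms(1-3)] by blast
  show ?thesis
  proof (rule Bochner_Integration.integrable_bound)
    show "integrable lborel (\<lambda>z::'a. K * exp (- (l/2) * (norm z)\<^sup>2))"
      using l by (intro integrable_mult_right integrable_exp_neg_norm_sq) auto
    show "(\<lambda>z. F z * exp (- Q z)) \<in> borel_measurable lborel"
      using assms(4,5) by (auto intro!: borel_measurable_continuous_onI continuous_intros)
    show "AE z in lborel. norm (F z * exp (- Q z)) \<le> norm (K * exp (- (l/2) * (norm z)\<^sup>2))"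
      using K by (auto intro: order_trans[OF _ abs_ge_self])
  qed
qed

definition cmonomial :: "('n::finite \<Rightarrow> nat) \<Rightarrow> ('n \<Rightarrow> nat) \<Rightarrow> complex^'n \<Rightarrow> complex" where
  "cmonomial n m z = (\<Prod>j\<in>UNIV. (z$j)^(n j) * (cnj (z$j))^(m j))"

definition cmonomial_deriv ::
    "('n::finite \<Rightarrow> nat) \<Rightarrow> ('n \<Rightarrow> nat) \<Rightarrow> complex^'n \<Rightarrow> complex^'n \<Rightarrow> complex" where
  "cmonomial_deriv n m w v = (\<Sum>j\<in>UNIV. of_nat (n j) * v$j * cmonomial (n(j := n j - 1)) m w
                                     + of_nat (m j) * cnj (v$j) * cmonomial n (m(j := m j - 1)) w)"

definition herm_form_deriv :: "complex^'n^'n \<Rightarrow> complex^'n \<Rightarrow> complex^'n \<Rightarrow> complex" where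
  "herm_form_deriv A w v = (\<Sum>h\<in>UNIV. \<Sum>k\<in>UNIV. cnj (v$h) * A$h$k * w$k + cnj (w$h) * A$h$k * v$k)"

lemma vec_add_scaleR_nth: "(w + t *\<^sub>R v)$h = w$h + complex_of_real t * v$h"
proof -
  have "(w + t *\<^sub>R v)$h = w$h + t *\<^sub>R (v$h)"
    by simp
  then show ?thesis
    by (simp only: scaleR_conv_of_real)
qed

lemma herm_form_add_scaleR:
  "herm_form A (w + t *\<^sub>R v) = herm_form A w + of_real t * herm_form_deriv A w v + (of_real t)\<^sup>2 * herm_form A v"
  unfolding herm_form_def herm_form_deriv_def vec_add_scaleR_nth
  by (simp add: algebra_simps sum.distrib sum_distrib_left power2_eq_square)

lemma cmonomial_fun_upd:
  "cmonomial (n(j := a)) (m(j := b)) w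
     = (w$j)^a * cnj (w$j)^b * (\<Prod>i\<in>UNIV-{j}. (w$i)^(n i) * cnj (w$i)^(m i))"
  unfolding cmonomial_def by (subst prod.remove[of UNIV j]) (auto intro!: prod.cong)

lemma cmonomial_nth_mult:
  assumes "n j \<noteq> 0"
  shows "z$j * cmonomial (n(j := n j - 1)) m z = cmonomial n m z"
  using assms cmonomial_fun_upd[of n j "n j - 1" m "m j" z] cmonomial_fun_upd[of n j "n j" m "m j" z]
  by (simp add: power_eq_if algebra_simps)

lemma cmonomial_cnj_nth_mult:
  assumes "m j \<noteq> 0"
  shows "cnj (z$j) * cmonomial n (m(j := m j - 1)) z = cmonomial n m z"
  using assms cmonomial_fun_upd[of n j "n j" m "m j - 1" z] cmonomial_fun_upd[of n j "n j" m "m j" z]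
  by (simp add: power_eq_if algebra_simps)

lemma has_field_derivative_cmonomial_line:
  "((\<lambda>s. \<Prod>j\<in>UNIV. (w$j + s * v$j)^(n j) * (cnj (w$j) + s * cnj (v$j))^(m j))
     has_field_derivative cmonomial_deriv n m w v) (at 0)"
proof -
  define R where "R = (\<lambda>j. \<Prod>i\<in>UNIV-{j}. (w$i)^(n i) * cnj (w$i)^(m i))"
  define D where "D = (\<lambda>j. of_nat (n j) * (w$j)^(n j - 1) * v$j * cnj (w$j)^(m j)
                        + (w$j)^(n j) * (of_nat (m j) * cnj (w$j)^(m j - 1) * cnj (v$j)))"
  have "((\<lambda>s. (w$j + s * v$j)^(n j) * (cnj (w$j) + s * cnj (v$j))^(m j)) has_field_derivative D j) (at 0)"
    for j
    unfolding D_def by (auto intro!: derivative_eq_intros)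
  from has_field_derivative_prod[of UNIV, OF this]
  have "((\<lambda>s. \<Prod>j\<in>UNIV. (w$j + s * v$j)^(n j) * (cnj (w$j) + s * cnj (v$j))^(m j))
     has_field_derivative (\<Sum>j\<in>UNIV. D j * R j)) (at 0)"
    by (simp add: R_def)
  moreover have "(\<Sum>j\<in>UNIV. D j * R j) = cmonomial_deriv n m w v"
    unfolding cmonomial_deriv_def
  proof (intro sum.cong refl)
    fix j
    show "D j * R j = of_nat (n j) * v$j * cmonomial (n(j := n j - 1)) m w
                    + of_nat (m j) * cnj (v$j) * cmonomial n (m(j := m j - 1)) w"
      using cmonomial_fun_upd[of n j "n j - 1" m "m j" w] cmonomial_fun_upd[of n j "n j" m "m j - 1" w]
      by (simp add: D_def R_def algebra_simps)
  qed
  ultimately show ?thesis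
    by simp
qed

lemma has_vector_derivative_cmonomial_gauss_line:
  "((\<lambda>t. cmonomial n m (w + t *\<^sub>R v) * exp (- herm_form A (w + t *\<^sub>R v)))
     has_vector_derivative
       ((cmonomial_deriv n m w v - cmonomial n m w * herm_form_deriv A w v) * exp (- herm_form A w)))
   (at 0)"
proof -
  define P where "P = (\<lambda>s. \<Prod>j\<in>UNIV. (w$j + s * v$j)^(n j) * (cnj (w$j) + s * cnj (v$j))^(m j))"
  define \<Psi> where
    "\<Psi> = (\<lambda>s. P s * exp (- (herm_form A w + s * herm_form_deriv A w v + s\<^sup>2 * herm_form A v)))"
  have "P 0 = cmonomial n m w"
    by (simp add: P_def cmonomial_def)
  moreover have "(P has_field_derivative cmonomial_deriv n m w v) (at 0)"
    unfolding P_def by (rule has_field_derivative_cmonomial_line)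
  ultimately have "(\<Psi> has_field_derivative
      (cmonomial_deriv n m w v - cmonomial n m w * herm_form_deriv A w v) * exp (- herm_form A w)) (at 0)"
    unfolding \<Psi>_def by (auto intro!: derivative_eq_intros simp: algebra_simps)
  then have "((\<lambda>t. \<Psi> (of_real t)) has_vector_derivative
      (cmonomial_deriv n m w v - cmonomial n m w * herm_form_deriv A w v) * exp (- herm_form A w)) (at 0)"
    using has_vector_derivative_real_field[of \<Psi> _ 0] by simp
  moreover have "\<Psi> (of_real t) = cmonomial n m (w + t *\<^sub>R v) * exp (- herm_form A (w + t *\<^sub>R v))" for t
    unfolding \<Psi>_def P_def cmonomial_def vec_add_scaleR_nth herm_form_add_scaleR by simp
  ultimately show ?thesis
    by simp
qed

lemma poly_growth_cmonomial: "poly_growth (cmonomial n m)"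
  unfolding cmonomial_def by (intro poly_growth_prod poly_growth_mult poly_growth_power
      poly_growth_nth poly_growth_cnj) auto

lemma continuous_on_cmonomial [continuous_intros]: "continuous_on X (cmonomial n m)"
  unfolding cmonomial_def by (intro continuous_intros)

lemma poly_growth_cmonomial_deriv: "poly_growth (\<lambda>z. cmonomial_deriv n m z v)"
  unfolding cmonomial_deriv_def
  by (intro poly_growth_sum poly_growth_add poly_growth_mult poly_growth_const poly_growth_cmonomial) auto

lemma continuous_on_cmonomial_deriv [continuous_intros]: "continuous_on X (\<lambda>z. cmonomial_deriv n m z v)"
  unfolding cmonomial_deriv_def by (intro continuous_intros)

lemma poly_growth_herm_form_deriv: "poly_growth (\<lambda>z. herm_form_deriv A z v)"
  unfolding herm_form_deriv_def
  by (intro poly_growth_sum poly_growth_add poly_growth_mult poly_growth_const poly_growth_nth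
      poly_growth_cnj) auto

lemma continuous_on_herm_form_deriv [continuous_intros]: "continuous_on X (\<lambda>z. herm_form_deriv A z v)"
  unfolding herm_form_deriv_def by (intro continuous_intros)

definition gauss_moment :: "complex^'n^'n \<Rightarrow> ('n \<Rightarrow> nat) \<Rightarrow> ('n \<Rightarrow> nat) \<Rightarrow> complex" where
  "gauss_moment A n m = (\<integral>z. cmonomial n m z * exp (- herm_form A z) \<partial>lborel)"

lemma integrable_cmonomial_gauss:
  assumes "pos_def_mat A"
  shows "integrable lborel (\<lambda>z. cmonomial n m z * exp (- herm_form A z))"
proof -
  obtain l where "l > 0" "\<And>z. l * (norm z)\<^sup>2 \<le> Re (herm_form A z)"
    using pos_def_mat_lower_bound[OF assms] by blast
  then show ?thesis
    by (intro integrable_poly_growth_mult_exp poly_growth_cmonomial continuous_intros)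
qed

lemma cmonomial_gauss_integration_by_parts:
  fixes A :: "complex^'n^'n" and n m :: "'n \<Rightarrow> nat" and v :: "complex^'n"
  assumes "pos_def_mat A"
  defines "G \<equiv> \<lambda>z. (cmonomial_deriv n m z v - cmonomial n m z * herm_form_deriv A z v) * exp (- herm_form A z)"
  shows "integrable lborel G" and "integral\<^sup>L lborel G = 0"
proof -
  obtain l where l: "l > 0" "\<And>z. l * (norm z)\<^sup>2 \<le> Re (herm_form A z)"
    using pos_def_mat_lower_bound[OF assms(1)] by blast
  have growth: "poly_growth (\<lambda>z. cmonomial_deriv n m z v - cmonomial n m z * herm_form_deriv A z v)"
    by (intro poly_growth_diff poly_growth_mult poly_growth_cmonomial_deriv poly_growth_cmonomial
        poly_growth_herm_form_deriv)
  then show "integrable lborel G"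
    unfolding G_def using l by (intro integrable_poly_growth_mult_exp continuous_intros)
  obtain K where K: "\<And>z. norm (G z) \<le> K * exp (- (l/2) * (norm z)\<^sup>2)"
    unfolding G_def using poly_growth_mult_exp_bound[OF growth l] by blast
  show "integral\<^sup>L lborel G = 0"
    unfolding G_def
  proof (rule integral_directional_derivative_eq_0[where C=K and \<mu>="l/2"])
    show "integrable lborel (\<lambda>z. cmonomial n m z * exp (- herm_form A z))"
      by (rule integrable_cmonomial_gauss[OF assms(1)])
  qed (use K l has_vector_derivative_cmonomial_gauss_line in
      \<open>auto simp: G_def intro!: borel_measurable_continuous_onI continuous_intros\<close>)
qed

lemma integral_cmonomial_combination_gauss:
  fixes A :: "complex^'n^'n"
  assumes "pos_def_mat A"
  shows "(\<integral>z. ((\<Sum>j\<in>UNIV. a j * cmonomial (N j) (M j) z) - cmonomial n m z) * exp (- herm_form A z) \<partial>lborel)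
       = (\<Sum>j\<in>UNIV. a j * gauss_moment A (N j) (M j)) - gauss_moment A n m"
  using integrable_cmonomial_gauss[OF assms]
  by (simp add: gauss_moment_def left_diff_distrib sum_distrib_right mult.assoc)

text \<open>For the directional derivative D_v, the combinations D_v + i D_(iv) and D_v - i D_(iv) are
  twice the Wirtinger derivatives in cnj z and in z along v.\<close>
lemma cmonomial_deriv_plus_ii:
  "cmonomial_deriv n m z v + \<i> * cmonomial_deriv n m z (\<chi> j. \<i> * v$j)
     = 2 * (\<Sum>j\<in>UNIV. of_nat (m j) * cnj (v$j) * cmonomial n (m(j := m j - 1)) z)"
  unfolding cmonomial_deriv_def sum_distrib_left sum.distrib[symmetric]
  by (intro sum.cong refl) (simp add: algebra_simps)

lemma cmonomial_deriv_minus_ii: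
  "cmonomial_deriv n m z v - \<i> * cmonomial_deriv n m z (\<chi> j. \<i> * v$j)
     = 2 * (\<Sum>j\<in>UNIV. of_nat (n j) * v$j * cmonomial (n(j := n j - 1)) m z)"
  unfolding cmonomial_deriv_def sum_distrib_left sum_subtractf[symmetric]
  by (intro sum.cong refl) (simp add: algebra_simps)

lemma herm_form_deriv_plus_ii:
  "herm_form_deriv A z v + \<i> * herm_form_deriv A z (\<chi> j. \<i> * v$j)
     = 2 * (\<Sum>h\<in>UNIV. \<Sum>k\<in>UNIV. cnj (v$h) * A$h$k * z$k)"
  unfolding herm_form_deriv_def sum_distrib_left sum.distrib[symmetric]
  by (intro sum.cong refl) (simp add: algebra_simps)

lemma herm_form_deriv_minus_ii:
  "herm_form_deriv A z v - \<i> * herm_form_deriv A z (\<chi> j. \<i> * v$j)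
     = 2 * (\<Sum>h\<in>UNIV. \<Sum>k\<in>UNIV. cnj (z$h) * A$h$k * v$k)"
  unfolding herm_form_deriv_def sum_distrib_left sum_subtractf[symmetric]
  by (intro sum.cong refl) (simp add: algebra_simps)

lemma sum_sum_right_inverse_mult:
  fixes S A :: "complex^'n^'n"
  assumes "S ** A = mat 1"
  shows "(\<Sum>h\<in>UNIV. \<Sum>k\<in>UNIV. S$i$h * A$h$k * z$k) = z$i"
proof -
  have "(\<Sum>h\<in>UNIV. \<Sum>k\<in>UNIV. S$i$h * A$h$k * z$k) = (S *v (A *v z))$i"
    by (simp add: matrix_vector_mult_def sum_distrib_left mult.assoc)
  also have "\<dots> = z$i"
    using assms by (simp add: matrix_vector_mul_assoc)
  finally show ?thesis .
qed

lemma sum_sum_left_inverse_mult: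
  fixes S A :: "complex^'n^'n"
  assumes "A ** S = mat 1"
  shows "(\<Sum>h\<in>UNIV. \<Sum>k\<in>UNIV. w$h * A$h$k * S$k$i) = w$i"
proof -
  have "(\<Sum>h\<in>UNIV. \<Sum>k\<in>UNIV. w$h * A$h$k * S$k$i) = (\<Sum>h\<in>UNIV. w$h * (A ** S)$h$i)"
    by (simp add: matrix_matrix_mult_def sum_distrib_left mult.assoc)
  also have "\<dots> = w$i"
    using assms by (simp add: mat_def if_distrib cong: if_cong)
  finally show ?thesis .
qed

lemma gauss_moment_recurrence_row:
  fixes S A :: "complex^'n^'n"
  assumes A: "pos_def_mat A" and SA: "S ** A = mat 1" and n: "n h \<noteq> 0"
  shows "gauss_moment A n m
       = (\<Sum>k\<in>UNIV. of_nat (m k) * S$h$k * gauss_moment A (n(h := n h - 1)) (m(k := m k - 1)))"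
proof -
  define n' where "n' = n(h := n h - 1)"
  define v :: "complex^'n" where "v = (\<chi> k. cnj (S$h$k))"
  define G where "G = (\<lambda>v z. (cmonomial_deriv n' m z v - cmonomial n' m z * herm_form_deriv A z v)
                             * exp (- herm_form A z))"
  have "G v z + \<i> * G (\<chi> j. \<i> * v$j) z
      = 2 * (((\<Sum>k\<in>UNIV. of_nat (m k) * S$h$k * cmonomial n' (m(k := m k - 1)) z) - cmonomial n m z)
             * exp (- herm_form A z))" for z
  proof -
    have nth: "z$h * cmonomial n' m z = cmonomial n m z"
      unfolding n'_def using n by (rule cmonomial_nth_mult)
    have "G v z + \<i> * G (\<chi> j. \<i> * v$j) z
        = ((cmonomial_deriv n' m z v + \<i> * cmonomial_deriv n' m z (\<chi> j. \<i> * v$j))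
           - cmonomial n' m z * (herm_form_deriv A z v + \<i> * herm_form_deriv A z (\<chi> j. \<i> * v$j)))
          * exp (- herm_form A z)"
      by (simp add: G_def algebra_simps)
    also have "\<dots> = (2 * (\<Sum>k\<in>UNIV. of_nat (m k) * S$h$k * cmonomial n' (m(k := m k - 1)) z)
                    - 2 * cmonomial n m z) * exp (- herm_form A z)"
      using sum_sum_right_inverse_mult[OF SA, of h z]
      unfolding cmonomial_deriv_plus_ii herm_form_deriv_plus_ii nth[symmetric] by (simp add: v_def mult_ac)
    finally show ?thesis
      by (simp add: algebra_simps)
  qed
  then have "(\<integral>z. G v z + \<i> * G (\<chi> j. \<i> * v$j) z \<partial>lborel)
      = 2 * ((\<Sum>k\<in>UNIV. of_nat (m k) * S$h$k * gauss_moment A n' (m(k := m k - 1))) - gauss_moment A n m)"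
    using integral_cmonomial_combination_gauss[OF A, of "\<lambda>k. of_nat (m k) * S$h$k" "\<lambda>_. n'"
        "\<lambda>k. m(k := m k - 1)" n m]
    by simp
  moreover have "(\<integral>z. G v z + \<i> * G (\<chi> j. \<i> * v$j) z \<partial>lborel) = 0"
    using cmonomial_gauss_integration_by_parts[OF A] by (simp add: G_def)
  ultimately show ?thesis
    by (simp add: n'_def)
qed

lemma gauss_moment_recurrence_column:
  fixes S A :: "complex^'n^'n"
  assumes A: "pos_def_mat A" and AS: "A ** S = mat 1" and m: "m k \<noteq> 0"
  shows "gauss_moment A n m
       = (\<Sum>h\<in>UNIV. of_nat (n h) * S$h$k * gauss_moment A (n(h := n h - 1)) (m(k := m k - 1)))"
proof -
  define m' where "m' = m(k := m k - 1)"
  define v :: "complex^'n" where "v = (\<chi> h. S$h$k)"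
  define G where "G = (\<lambda>v z. (cmonomial_deriv n m' z v - cmonomial n m' z * herm_form_deriv A z v)
                             * exp (- herm_form A z))"
  have "G v z - \<i> * G (\<chi> j. \<i> * v$j) z
      = 2 * (((\<Sum>h\<in>UNIV. of_nat (n h) * S$h$k * cmonomial (n(h := n h - 1)) m' z) - cmonomial n m z)
             * exp (- herm_form A z))" for z
  proof -
    have cnj_nth: "cnj (z$k) * cmonomial n m' z = cmonomial n m z"
      unfolding m'_def using m by (rule cmonomial_cnj_nth_mult)
    have "G v z - \<i> * G (\<chi> j. \<i> * v$j) z
        = ((cmonomial_deriv n m' z v - \<i> * cmonomial_deriv n m' z (\<chi> j. \<i> * v$j))
           - cmonomial n m' z * (herm_form_deriv A z v - \<i> * herm_form_deriv A z (\<chi> j. \<i> * v$j)))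
          * exp (- herm_form A z)"
      by (simp add: G_def algebra_simps)
    also have "\<dots> = (2 * (\<Sum>h\<in>UNIV. of_nat (n h) * S$h$k * cmonomial (n(h := n h - 1)) m' z)
                    - 2 * cmonomial n m z) * exp (- herm_form A z)"
      using sum_sum_left_inverse_mult[OF AS, of "\<chi> h. cnj (z$h)" k]
      unfolding cmonomial_deriv_minus_ii herm_form_deriv_minus_ii cnj_nth[symmetric] by (simp add: v_def mult_ac)
    finally show ?thesis
      by (simp add: algebra_simps)
  qed
  then have "(\<integral>z. G v z - \<i> * G (\<chi> j. \<i> * v$j) z \<partial>lborel)
      = 2 * ((\<Sum>h\<in>UNIV. of_nat (n h) * S$h$k * gauss_moment A (n(h := n h - 1)) m') - gauss_moment A n m)"
    using integral_cmonomial_combination_gauss[OF A, of "\<lambda>h. of_nat (n h) * S$h$k"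
        "\<lambda>h. n(h := n h - 1)" "\<lambda>_. m'" n m]
    by simp
  moreover have "(\<integral>z. G v z - \<i> * G (\<chi> j. \<i> * v$j) z \<partial>lborel) = 0"
    using cmonomial_gauss_integration_by_parts[OF A] by (simp add: G_def)
  ultimately show ?thesis
    by (simp add: m'_def)
qed

lemma cn_moment_eq_gauss_moment:
  fixes S :: "complex^'n^'n"
  shows "cn_moment S n m = gauss_moment (matrix_inv S) n m / (of_real pi ^ CARD('n) * det S)"
  unfolding cn_moment_def cn_density_def gauss_moment_def cmonomial_def by simp

lemma cn_moment_recurrence_row:
  fixes S :: "complex^'n^'n"
  assumes "pos_def_mat S" and "n h \<noteq> 0"
  shows "cn_moment S n m
       = (\<Sum>k\<in>UNIV. of_nat (m k) * S$h$k * cn_moment S (n(h := n h - 1)) (m(k := m k - 1)))"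
  unfolding cn_moment_eq_gauss_moment
  using gauss_moment_recurrence_row[where n=n and h=h and m=m, OF pos_def_mat_matrix_inv[OF assms(1)]
      pos_def_mat_matrix_inv_mult(1)[OF assms(1)] assms(2)]
  by (simp add: sum_divide_distrib)

lemma cn_moment_recurrence_column:
  fixes S :: "complex^'n^'n"
  assumes "pos_def_mat S" and "m k \<noteq> 0"
  shows "cn_moment S n m
       = (\<Sum>h\<in>UNIV. of_nat (n h) * S$h$k * cn_moment S (n(h := n h - 1)) (m(k := m k - 1)))"
  unfolding cn_moment_eq_gauss_moment
  using gauss_moment_recurrence_column[where n=n and k=k and m=m, OF pos_def_mat_matrix_inv[OF assms(1)]
      pos_def_mat_matrix_inv_mult(2)[OF assms(1)] assms(2)]
  by (simp add: sum_divide_distrib)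

text \<open>Positive definiteness over the complex numbers already forces S to be Hermitian.\<close>
theorem proposition3p3:
  fixes S :: "complex^'n^'n" and n m :: "'n \<Rightarrow> nat"
  assumes "hermitian_mat S" and "pos_def_mat S"
  shows "(\<forall>h. n h \<noteq> 0 \<longrightarrow>
            cn_moment S n m = (\<Sum>k\<in>{k. m k \<noteq> 0}.
               of_nat (m k) * S$h$k * cn_moment S (n(h := n h - 1)) (m(k := m k - 1))))
       \<and> (\<forall>k. m k \<noteq> 0 \<longrightarrow>
            cn_moment S n m = (\<Sum>h\<in>{h. n h \<noteq> 0}.
               of_nat (n h) * S$h$k * cn_moment S (n(h := n h - 1)) (m(k := m k - 1))))"
proof -
  have drop_zeros: "(\<Sum>i\<in>UNIV. of_nat (r i) * f i) = (\<Sum>i\<in>{i. r i \<noteq> 0}. of_nat (r i) * f i)"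
    for r :: "'n \<Rightarrow> nat" and f :: "'n \<Rightarrow> complex"
    by (rule sum.mono_neutral_right) auto
  show ?thesis
    using cn_moment_recurrence_row[OF assms(2)] cn_moment_recurrence_column[OF assms(2)]
    unfolding mult.assoc drop_zeros by blast
qed

end
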